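(* Let $\mathcal{H}$ be the Hilbert space described in the context and $p\in[1,\infty)$. Let $\mu$ be a Borel probability measure on $\mathcal{H}$ such that for some $s>2p$, $$\widetilde{M}_s(\mu):=\int \Big(\sum_{j=1}^{\infty}\frac{1}{\lambda_j^2}\langle x, \psi_j\rangle^2_{L^2} \Big)^{\frac{s}{2}}\,\mu(dx) <\infty,$$ and assume there are constants $C>0$, $\gamma>1$ with $\lambda_j\le Cj^{-\gamma}$ for all $j\ge1$. Then $$\int_{\mathcal{H}} \|\mathrm{Proj}^d (x)-x\|^q_{\mathcal{H}}\,\mu(dx) \leq C d^{-\frac{q\gamma}{2}}$$ for all $d\geq 1$ and all $q\in [1,s]$, where the constant $C$ depends only on $q$ and $\widetilde{M}_s(\mu)$.
   Context: Let $(\Omega,m)$ be a measure space, $(\psi_j)_{j\ge1}$ an orthonormal basis of $L^2(\Omega,m)$ with inner product $\langle\cdot,\cdot\rangle_{L^2}$, and $(\lambda_j)_{j\ge1}$ a non-increasing sequence of positive numbers converging to $0$. Let $\mathcal{H}=\{f\in L^2(\Omega,m):\sum_j\langle f,\psi_j\rangle_{L^2}^2/\lambda_j<\infty\}$ with inner product $\langle f,g\rangle_{\mathcal{H}}=\sum_j\lambda_j^{-1}\langle f,\psi_j\rangle_{L^2}\langle g,\psi_j\rangle_{L^2}$ and norm $\|\cdot\|_{\mathcal{H}}$. $\mathrm{Proj}^d$ is the orthogonal projection onto $\mathrm{span}\{\sqrt{\lambda_j}\psi_j:j=1,\dots,d\}$. *)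

theory Defs
  imports "HOL-Analysis.Analysis" "HOL-Probability.Probability"
begin

text \<open>The ambient space L2(Omega,m) is modelled by an abstract real Hilbert space
  of type 'a; psi j (j \<ge> 1) is an orthonormal basis of it and lam j (j \<ge> 1) the
  eigenvalue sequence.\<close>

definition orthonormal_basis :: "(nat \<Rightarrow> 'a::{real_inner,complete_space}) \<Rightarrow> bool" where
  "orthonormal_basis psi \<longleftrightarrow>
     (\<forall>i\<ge>1. \<forall>j\<ge>1. inner (psi i) (psi j) = (if i = j then 1 else 0)) \<and>
     closure (span (psi ` {1..})) = UNIV"

definition eigen_seq :: "(nat \<Rightarrow> real) \<Rightarrow> bool" where
  "eigen_seq lam \<longleftrightarrow> (\<forall>j\<ge>1. lam j > 0) \<and> (\<forall>i\<ge>1. \<forall>j\<ge>i. lam j \<le> lam i)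
     \<and> (lam \<longlonglongrightarrow> 0)"

definition Hspace :: "(nat \<Rightarrow> 'a::real_inner) \<Rightarrow> (nat \<Rightarrow> real) \<Rightarrow> 'a set" where
  "Hspace psi lam = {f. summable (\<lambda>j. (inner f (psi (Suc j)))\<^sup>2 / lam (Suc j))}"

definition Hinner :: "(nat \<Rightarrow> 'a::real_inner) \<Rightarrow> (nat \<Rightarrow> real) \<Rightarrow> 'a \<Rightarrow> 'a \<Rightarrow> real" where
  "Hinner psi lam f g = (\<Sum>j. inner f (psi (Suc j)) * inner g (psi (Suc j)) / lam (Suc j))"

definition Hnorm :: "(nat \<Rightarrow> 'a::real_inner) \<Rightarrow> (nat \<Rightarrow> real) \<Rightarrow> 'a \<Rightarrow> real" where
  "Hnorm psi lam f = sqrt (Hinner psi lam f f)"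

definition Hdist :: "(nat \<Rightarrow> 'a::real_inner) \<Rightarrow> (nat \<Rightarrow> real) \<Rightarrow> 'a \<Rightarrow> 'a \<Rightarrow> real" where
  "Hdist psi lam f g = Hnorm psi lam (f - g)"

definition Hborel_sets :: "(nat \<Rightarrow> 'a::real_inner) \<Rightarrow> (nat \<Rightarrow> real) \<Rightarrow> 'a set set" where
  "Hborel_sets psi lam = sigma_sets (Hspace psi lam)
     {U. openin (Metric_space.mtopology (Hspace psi lam) (Hdist psi lam)) U}"

definition Proj :: "(nat \<Rightarrow> 'a::real_inner) \<Rightarrow> (nat \<Rightarrow> real) \<Rightarrow> nat \<Rightarrow> 'a \<Rightarrow> 'a" where
  "Proj psi lam d x = (THE p. p \<in> span ((\<lambda>j. sqrt (lam j) *\<^sub>R psi j) ` {1..d}) \<and>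
      (\<forall>v \<in> span ((\<lambda>j. sqrt (lam j) *\<^sub>R psi j) ` {1..d}). Hinner psi lam (x - p) v = 0))"

text \<open>The moment tilde M_s(mu); the integrand is +infinity where the series diverges.\<close>
definition Mtilde :: "(nat \<Rightarrow> 'a::real_inner) \<Rightarrow> (nat \<Rightarrow> real) \<Rightarrow> real \<Rightarrow> 'a measure \<Rightarrow> ennreal" where
  "Mtilde psi lam s mu = (\<integral>\<^sup>+ x. (let S = (\<lambda>j. (inner x (psi (Suc j)))\<^sup>2 / (lam (Suc j))\<^sup>2) in
       if summable S then ennreal ((suminf S) powr (s / 2)) else \<infinity>) \<partial>mu)"

end

theory Submission
  imports Defs
begin

text \<open>By orthonormality, \<open>Proj\<^sup>d x\<close> is the partial sum of the first \<open>d\<close> terms of the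
  expansion of \<open>x\<close> in the basis \<open>\<psi>\<close>. Hence, with \<open>S(x) = \<Sum>\<^sub>j \<langle>x,\<psi>\<^sub>j\<rangle>\<^sup>2 / \<lambda>\<^sub>j\<^sup>2\<close>,
  the squared H-norm of \<open>Proj\<^sup>d x - x\<close> is \<open>\<Sum>\<^sub>j\<^sub>>\<^sub>d \<langle>x,\<psi>\<^sub>j\<rangle>\<^sup>2 / \<lambda>\<^sub>j \<le> \<lambda>\<^sub>d\<^sub>+\<^sub>1 S(x) \<le> C d\<^sup>-\<^sup>\<gamma> S(x)\<close>.
  Raising this to the power \<open>q/2\<close> and using \<open>t\<^sup>q\<^sup>/\<^sup>2 \<le> 1 + t\<^sup>s\<^sup>/\<^sup>2\<close> for \<open>q \<le> s\<close>
  and integrating gives the claim with \<open>K q m = C\<^sup>q\<^sup>/\<^sup>2 (1 + m)\<close>. The integrands need not be measurable for the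
  Borel sets of H, so the integration step only uses monotonicity and subadditivity
  of the lower integral, which hold for arbitrary functions.\<close>

lemma nn_integral_cmult_le:
  fixes c :: ennreal
  assumes "c \<noteq> top"
  shows "(\<integral>\<^sup>+ x. c * f x \<partial>M) \<le> c * integral\<^sup>N M f"
proof (cases "c = 0")
  case False
  show ?thesis
    unfolding nn_integral_def[of M "\<lambda>x. c * f x"]
  proof (rule SUP_least, clarify)
    fix h assume h: "simple_function M h" and h_le: "h \<le> (\<lambda>x. c * f x)"
    have [measurable]: "h \<in> borel_measurable M"
      using h by (rule borel_measurable_simple_function)
    have h_eq: "c * (h x / c) = h x" for x
      using False assms ennreal_mult_divide_eq[of c "h x"] by (simp add: ennreal_times_divide mult.commute)
    have h_div_le: "h x / c \<le> f x" for x
    proof -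
      have "h x / c \<le> c * f x / c"
        using h_le by (intro divide_right_mono_ennreal) (simp add: le_fun_def)
      then show ?thesis
        using False assms ennreal_mult_divide_eq[of c "f x"] by (simp add: mult.commute)
    qed
    have "integral\<^sup>S M h = (\<integral>\<^sup>+ x. c * (h x / c) \<partial>M)"
      by (simp add: h_eq nn_integral_eq_simple_integral[OF h])
    also have "\<dots> = c * (\<integral>\<^sup>+ x. h x / c \<partial>M)"
      by (rule nn_integral_cmult) measurable
    also have "\<dots> \<le> c * integral\<^sup>N M f"
      by (intro mult_left_mono nn_integral_mono h_div_le) simp
    finally show "integral\<^sup>S M h \<le> c * integral\<^sup>N M f" .
  qed
qed simp

lemma nn_integral_add_const_le:
  fixes a :: ennreal
  assumes "a \<noteq> top"
  shows "(\<integral>\<^sup>+ x. a + f x \<partial>M) \<le> a * emeasure M (space M) + integral\<^sup>N M f"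
  unfolding nn_integral_def[of M "\<lambda>x. a + f x"]
proof (rule SUP_least, clarify)
  fix h assume h: "simple_function M h" and h_le: "h \<le> (\<lambda>x. a + f x)"
  have [measurable]: "h \<in> borel_measurable M"
    using h by (rule borel_measurable_simple_function)
  have "integral\<^sup>S M h = integral\<^sup>N M h"
    using h by (rule nn_integral_eq_simple_integral[symmetric])
  also have "\<dots> \<le> (\<integral>\<^sup>+ x. a + (h x - a) \<partial>M)"
    by (intro nn_integral_mono) (metis add.commute diff_add_self_ennreal nle_le)
  also have "\<dots> = a * emeasure M (space M) + (\<integral>\<^sup>+ x. h x - a \<partial>M)"
    by (subst nn_integral_add) auto
  also have "\<dots> \<le> a * emeasure M (space M) + integral\<^sup>N M f"
    using h_le assms by (intro add_left_mono nn_integral_mono) (auto simp: le_fun_def ennreal_minus_le_iff)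
  finally show "integral\<^sup>S M h \<le> a * emeasure M (space M) + integral\<^sup>N M f" .
qed

definition orthonormal_seq :: "(nat \<Rightarrow> 'a::real_inner) \<Rightarrow> bool" where
  "orthonormal_seq psi \<longleftrightarrow> (\<forall>i\<ge>1. \<forall>j\<ge>1. inner (psi i) (psi j) = (if i = j then 1 else 0))"

lemma orthonormal_basis_imp_orthonormal_seq: "orthonormal_basis psi \<Longrightarrow> orthonormal_seq psi"
  unfolding orthonormal_basis_def orthonormal_seq_def by blast

lemma inner_sum_orthonormal:
  assumes on: "orthonormal_seq psi" and k: "k \<ge> 1"
  shows "inner (\<Sum>i\<in>{1..d}. a i *\<^sub>R psi i) (psi k) = (if k \<le> d then a k else 0)"
proof -
  have "inner (\<Sum>i\<in>{1..d}. a i *\<^sub>R psi i) (psi k) = (\<Sum>i\<in>{1..d}. if i = k then a k else 0)"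
    unfolding inner_sum_left using on k by (intro sum.cong) (auto simp: orthonormal_seq_def)
  then show ?thesis
    using k by simp
qed

lemma span_orthonormal_expansion:
  assumes on: "orthonormal_seq psi" and v: "v \<in> span (psi ` {1..d})"
  shows "v = (\<Sum>k\<in>{1..d}. inner v (psi k) *\<^sub>R psi k)"
proof -
  define R where "R v = (\<Sum>k\<in>{1..d}. inner v (psi k) *\<^sub>R psi k)" for v
  have "R (u + w) = R u + R w" "R (c *\<^sub>R u) = c *\<^sub>R R u" for u w c
    unfolding R_def by (simp_all add: inner_add_left scaleR_add_left sum.distrib scaleR_sum_right)
  then have R_subspace: "subspace {v. v = R v}"
    unfolding subspace_def by (auto simp: R_def)
  have R_basis: "psi j = R (psi j)" if j: "j \<in> {1..d}" for j
  proof -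
    have "R (psi j) = (\<Sum>k\<in>{1..d}. if k = j then psi j else 0)"
      unfolding R_def using on j by (intro sum.cong) (auto simp: orthonormal_seq_def)
    then show ?thesis
      using j by simp
  qed
  have "v = R v"
    by (rule span_induct[OF v R_subspace]) (use R_basis in auto)
  then show ?thesis
    unfolding R_def .
qed

lemma inner_span_orthonormal_eq_0:
  assumes on: "orthonormal_seq psi" and v: "v \<in> span (psi ` {1..d})" and k: "d < k"
  shows "inner v (psi k) = 0"
proof -
  have "inner v (psi k) = inner (\<Sum>i\<in>{1..d}. inner v (psi i) *\<^sub>R psi i) (psi k)"
    using span_orthonormal_expansion[OF on v] by (rule arg_cong)
  also have "\<dots> = 0"
    using inner_sum_orthonormal[OF on, where k = k] k by simp
  finally show ?thesis .
qed

lemma span_image_scaleR_nonzero: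
  assumes "\<And>j. j \<in> A \<Longrightarrow> c j \<noteq> 0"
  shows "span ((\<lambda>j. c j *\<^sub>R f j) ` A) = span (f ` A)"
proof -
  have "f j \<in> span ((\<lambda>j. c j *\<^sub>R f j) ` A)" if j: "j \<in> A" for j
  proof -
    have "inverse (c j) *\<^sub>R (c j *\<^sub>R f j) \<in> span ((\<lambda>j. c j *\<^sub>R f j) ` A)"
      using j by (intro span_scale span_base imageI)
    then show ?thesis
      using assms j by simp
  qed
  moreover have "c j *\<^sub>R f j \<in> span (f ` A)" if "j \<in> A" for j
    using that by (intro span_scale span_base imageI)
  ultimately show ?thesis
    by (auto simp: span_eq)
qed

lemma Hinner_basis:
  assumes on: "orthonormal_seq psi" and k: "k \<ge> 1"
  shows "Hinner psi lam f (psi k) = inner f (psi k) / lam k"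
proof -
  have "(\<lambda>j. inner f (psi (Suc j)) * inner (psi k) (psi (Suc j)) / lam (Suc j))
      = (\<lambda>j. if j = k - 1 then inner f (psi k) / lam k else 0)"
    using on k by (auto simp: orthonormal_seq_def)
  then show ?thesis
    unfolding Hinner_def by (simp add: sums_unique[OF sums_single, symmetric])
qed

lemma Proj_eq_partial_sum:
  assumes on: "orthonormal_seq psi" and lam_pos: "\<And>j. j \<ge> 1 \<Longrightarrow> lam j > 0"
  shows "Proj psi lam d x = (\<Sum>k\<in>{1..d}. inner x (psi k) *\<^sub>R psi k)"
proof -
  define V where "V = span (psi ` {1..d})"
  define P where "P = (\<Sum>k\<in>{1..d}. inner x (psi k) *\<^sub>R psi k)"
  have V_eq: "span ((\<lambda>j. sqrt (lam j) *\<^sub>R psi j) ` {1..d}) = V"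
    unfolding V_def using lam_pos by (intro span_image_scaleR_nonzero) force
  have P_in_V: "P \<in> V"
    unfolding P_def V_def by (intro span_sum span_scale span_base imageI)
  have inner_P: "inner P (psi k) = inner x (psi k)" if "k \<in> {1..d}" for k
    unfolding P_def using inner_sum_orthonormal[OF on, where k = k] that by simp
  have P_orth: "Hinner psi lam (x - P) v = 0" if v: "v \<in> V" for v
  proof -
    have terms_zero: "inner (x - P) (psi (Suc j)) * inner v (psi (Suc j)) / lam (Suc j) = 0" for j
      using inner_P[of "Suc j"] inner_span_orthonormal_eq_0[OF on v[unfolded V_def], of "Suc j"]
      by (cases "Suc j \<le> d") (auto simp: inner_diff_left)
    show ?thesis
      unfolding Hinner_def terms_zero by simp
  qed
  have P_unique: "p = P" if p: "p \<in> V" "\<forall>v\<in>V. Hinner psi lam (x - p) v = 0" for p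
  proof -
    have "inner p (psi k) = inner x (psi k)" if k: "k \<in> {1..d}" for k
    proof -
      have "psi k \<in> V"
        unfolding V_def using k by (intro span_base imageI)
      then have "inner (x - p) (psi k) / lam k = 0"
        using p Hinner_basis[OF on, of k lam "x - p"] k by simp
      then show ?thesis
        using lam_pos[of k] k by (simp add: inner_diff_left)
    qed
    then have "(\<Sum>k\<in>{1..d}. inner p (psi k) *\<^sub>R psi k) = P"
      unfolding P_def by (intro sum.cong) simp_all
    with span_orthonormal_expansion[OF on p(1)[unfolded V_def]] show ?thesis
      by (rule trans)
  qed
  show ?thesis
    unfolding Proj_def V_eq P_def[symmetric]
  proof (rule the_equality)
    show "P \<in> V \<and> (\<forall>v\<in>V. Hinner psi lam (x - P) v = 0)"
      using P_in_V P_orth by blast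
  qed (use P_unique in blast)
qed

lemma
  assumes on: "orthonormal_seq psi" and lam: "eigen_seq lam"
    and summable: "summable (\<lambda>j. (inner x (psi (Suc j)))\<^sup>2 / (lam (Suc j))\<^sup>2)"
  shows Hnorm_Proj_diff_nonneg: "0 \<le> Hnorm psi lam (Proj psi lam d x - x)"
    and Hnorm_Proj_diff_sq_le: "(Hnorm psi lam (Proj psi lam d x - x))\<^sup>2
      \<le> lam (Suc d) * (\<Sum>j. (inner x (psi (Suc j)))\<^sup>2 / (lam (Suc j))\<^sup>2)"
proof -
  have lam_pos: "\<And>j. j \<ge> 1 \<Longrightarrow> lam j > 0"
    and lam_antimono: "\<And>i j. 1 \<le> i \<Longrightarrow> i \<le> j \<Longrightarrow> lam j \<le> lam i"
    using lam unfolding eigen_seq_def by auto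
  define T where "T j = (inner x (psi (Suc j)))\<^sup>2 / (lam (Suc j))\<^sup>2" for j
  define e where "e j = (if Suc j \<le> d then 0 else lam (Suc j) * T j)" for j
  have summable_T: "summable T"
    using summable unfolding T_def .
  have inner_diff: "inner (Proj psi lam d x - x) (psi (Suc j))
      = (if Suc j \<le> d then 0 else - inner x (psi (Suc j)))" for j
    using inner_sum_orthonormal[OF on, where k = "Suc j" and d = d and a = "\<lambda>k. inner x (psi k)"]
    by (simp add: Proj_eq_partial_sum[OF on lam_pos] inner_diff_left)
  have Hinner_eq: "Hinner psi lam (Proj psi lam d x - x) (Proj psi lam d x - x) = suminf e"
    unfolding Hinner_def
  proof (rule suminf_cong)
    fix j
    have "lam (Suc j) > 0"
      by (rule lam_pos) simp
    then show "inner (Proj psi lam d x - x) (psi (Suc j)) * inner (Proj psi lam d x - x) (psi (Suc j))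
        / lam (Suc j) = e j"
      by (simp add: inner_diff e_def T_def power2_eq_square)
  qed
  have e_nonneg: "0 \<le> e j" for j
    using lam_pos[of "Suc j"] by (simp add: e_def T_def)
  have T_nonneg: "0 \<le> T j" for j
    by (simp add: T_def)
  have e_le: "e j \<le> lam (Suc d) * T j" for j
    using lam_pos[of "Suc d"] lam_antimono[of "Suc d" "Suc j"] T_nonneg[of j]
    by (auto simp: e_def intro: mult_right_mono)
  have summable_e: "summable e"
    by (rule summable_comparison_test'[OF summable_mult[OF summable_T]]) (use e_nonneg e_le in auto)
  have Hinner_nonneg: "0 \<le> Hinner psi lam (Proj psi lam d x - x) (Proj psi lam d x - x)"
    unfolding Hinner_eq using summable_e e_nonneg by (rule suminf_nonneg)
  then show "0 \<le> Hnorm psi lam (Proj psi lam d x - x)"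
    unfolding Hnorm_def by simp
  have "suminf e \<le> (\<Sum>j. lam (Suc d) * T j)"
    by (intro suminf_le summable_e summable_mult summable_T e_le)
  also have "\<dots> = lam (Suc d) * suminf T"
    by (rule suminf_mult[OF summable_T])
  finally show "(Hnorm psi lam (Proj psi lam d x - x))\<^sup>2
      \<le> lam (Suc d) * (\<Sum>j. (inner x (psi (Suc j)))\<^sup>2 / (lam (Suc j))\<^sup>2)"
    using Hinner_nonneg unfolding Hnorm_def Hinner_eq T_def by simp
qed

lemma powr_le_one_plus_powr:
  fixes t a b :: real
  assumes "0 \<le> t" "0 \<le> a" "a \<le> b"
  shows "t powr a \<le> 1 + t powr b"
proof (cases "t \<le> 1")
  case True
  then have "t powr a \<le> 1 powr a"
    using assms by (intro powr_mono2) auto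
  then have "t powr a \<le> 1"
    by simp
  then show ?thesis
    using powr_ge_zero[of t b] by linarith
next
  case False
  then have "t powr a \<le> t powr b"
    using assms by (intro powr_mono) auto
  then show ?thesis
    by simp
qed

definition weighted_moment :: "(nat \<Rightarrow> 'a::real_inner) \<Rightarrow> (nat \<Rightarrow> real) \<Rightarrow> real \<Rightarrow> 'a \<Rightarrow> ennreal" where
  "weighted_moment psi lam s x = (let S = (\<lambda>j. (inner x (psi (Suc j)))\<^sup>2 / (lam (Suc j))\<^sup>2) in
     if summable S then ennreal ((suminf S) powr (s / 2)) else \<infinity>)"

lemma Mtilde_eq_nn_integral: "Mtilde psi lam s mu = (\<integral>\<^sup>+ x. weighted_moment psi lam s x \<partial>mu)"
  unfolding Mtilde_def weighted_moment_def ..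

lemma Hnorm_Proj_diff_powr_le:
  fixes C \<gamma> q s :: real
  assumes on: "orthonormal_seq psi" and lam: "eigen_seq lam"
    and decay: "\<And>j. j \<ge> 1 \<Longrightarrow> lam j \<le> C * real j powr (-\<gamma>)"
    and C: "C > 0" and d: "d \<ge> 1" and q: "0 \<le> q" "q \<le> s"
  shows "ennreal (Hnorm psi lam (Proj psi lam d x - x) powr q)
    \<le> ennreal (C powr (q/2) * real d powr (- q * \<gamma> / 2)) * (1 + weighted_moment psi lam s x)"
proof (cases "summable (\<lambda>j. (inner x (psi (Suc j)))\<^sup>2 / (lam (Suc j))\<^sup>2)")
  case False
  then show ?thesis
    using C d by (simp add: weighted_moment_def ennreal_mult_top)
next
  case True
  define S where "S = (\<Sum>j. (inner x (psi (Suc j)))\<^sup>2 / (lam (Suc j))\<^sup>2)"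
  define h where "h = Hnorm psi lam (Proj psi lam d x - x)"
  define c where "c = C powr (q/2) * real d powr (- q * \<gamma> / 2)"
  have S_nonneg: "0 \<le> S"
    unfolding S_def by (intro suminf_nonneg True) simp
  have h_nonneg: "0 \<le> h"
    unfolding h_def using on lam True by (rule Hnorm_Proj_diff_nonneg)
  have "lam (Suc d) \<le> lam d"
    using lam d unfolding eigen_seq_def by auto
  then have lam_d: "lam (Suc d) \<le> C * real d powr (-\<gamma>)"
    using decay[OF d] by linarith
  have "h powr q = (h powr 2) powr (q/2)"
    by (simp add: powr_powr)
  also have "\<dots> = (h\<^sup>2) powr (q/2)"
    using h_nonneg by simp
  also have "\<dots> \<le> (C * real d powr (-\<gamma>) * S) powr (q/2)"
  proof (intro powr_mono2)
    have "h\<^sup>2 \<le> lam (Suc d) * S"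
      unfolding h_def S_def by (rule Hnorm_Proj_diff_sq_le[OF on lam True])
    also have "\<dots> \<le> C * real d powr (-\<gamma>) * S"
      using lam_d S_nonneg by (rule mult_right_mono)
    finally show "h\<^sup>2 \<le> C * real d powr (-\<gamma>) * S" .
  qed (use q in auto)
  also have "\<dots> = c * S powr (q/2)"
    using C S_nonneg by (simp add: c_def powr_mult powr_powr mult.commute)
  also have "\<dots> \<le> c * (1 + S powr (s/2))"
    using powr_le_one_plus_powr[OF S_nonneg, of "q/2" "s/2"] q by (intro mult_left_mono) (auto simp: c_def)
  finally have "ennreal (h powr q) \<le> ennreal (c * (1 + S powr (s/2)))"
    by (rule ennreal_leI)
  also have "\<dots> = ennreal c * (1 + ennreal (S powr (s/2)))"
    by (simp add: c_def ennreal_mult)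
  finally show ?thesis
    using True by (simp add: weighted_moment_def S_def h_def c_def)
qed

theorem lemma6p6:
  fixes C \<gamma> s p :: real
  assumes "p \<ge> 1" and "s > 2 * p" and "C > 0" and "\<gamma> > 1"
  shows "\<exists>K :: real \<Rightarrow> real \<Rightarrow> real.
    \<forall>(psi :: nat \<Rightarrow> 'a::{real_inner,complete_space}) (lam :: nat \<Rightarrow> real) (mu :: 'a measure).
      orthonormal_basis psi \<and> eigen_seq lam \<and>
      (\<forall>j\<ge>1. lam j \<le> C * real j powr (-\<gamma>)) \<and>
      prob_space mu \<and> space mu = Hspace psi lam \<and> sets mu = Hborel_sets psi lam \<and>
      Mtilde psi lam s mu < \<infinity>
      \<longrightarrow> (\<forall>d::nat \<ge> 1. \<forall>q \<in> {1..s}.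
            (\<integral>\<^sup>+ x. ennreal (Hnorm psi lam (Proj psi lam d x - x) powr q) \<partial>mu)
              \<le> ennreal (K q (enn2real (Mtilde psi lam s mu)) * real d powr (- q * \<gamma> / 2)))"
proof (intro exI[of _ "\<lambda>q m. C powr (q/2) * (1 + m)"] allI impI ballI)
  fix psi :: "nat \<Rightarrow> 'a" and lam :: "nat \<Rightarrow> real" and mu :: "'a measure" and d :: nat and q :: real
  assume hyps: "orthonormal_basis psi \<and> eigen_seq lam \<and>
      (\<forall>j\<ge>1. lam j \<le> C * real j powr (-\<gamma>)) \<and>
      prob_space mu \<and> space mu = Hspace psi lam \<and> sets mu = Hborel_sets psi lam \<and>
      Mtilde psi lam s mu < \<infinity>"
    and d: "d \<ge> 1" and q: "q \<in> {1..s}"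
  then have on: "orthonormal_seq psi" and lam: "eigen_seq lam" and prob: "prob_space mu"
    and M_finite: "Mtilde psi lam s mu < \<infinity>"
    by (auto intro: orthonormal_basis_imp_orthonormal_seq)
  define c where "c = C powr (q/2) * real d powr (- q * \<gamma> / 2)"
  define m where "m = enn2real (Mtilde psi lam s mu)"
  have "(\<integral>\<^sup>+ x. ennreal (Hnorm psi lam (Proj psi lam d x - x) powr q) \<partial>mu)
      \<le> (\<integral>\<^sup>+ x. ennreal c * (1 + weighted_moment psi lam s x) \<partial>mu)"
    using Hnorm_Proj_diff_powr_le[OF on lam _ \<open>C > 0\<close> d] hyps q
    by (intro nn_integral_mono) (auto simp: c_def)
  also have "\<dots> \<le> ennreal c * (\<integral>\<^sup>+ x. 1 + weighted_moment psi lam s x \<partial>mu)"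
    by (rule nn_integral_cmult_le) simp
  also have "\<dots> \<le> ennreal c * (1 + Mtilde psi lam s mu)"
    using nn_integral_add_const_le[of 1 mu "weighted_moment psi lam s"] prob_space.emeasure_space_1[OF prob]
    by (intro mult_left_mono) (simp_all add: Mtilde_eq_nn_integral)
  also have "\<dots> = ennreal (C powr (q/2) * (1 + m) * real d powr (- q * \<gamma> / 2))"
    using M_finite \<open>C > 0\<close> by (simp add: c_def m_def ennreal_mult mult_ac)
  finally show "(\<integral>\<^sup>+ x. ennreal (Hnorm psi lam (Proj psi lam d x - x) powr q) \<partial>mu)
      \<le> ennreal (C powr (q/2) * (1 + m) * real d powr (- q * \<gamma> / 2))" .
qed

end
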